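(* For every graph $G$ and every edge $e\in E(G)$, $$\mathrm{adim}(G)-1\le\mathrm{adim}(G-e)\le\mathrm{adim}(G)+1.$$
   Context: In a graph $H$, let $d_{H,1}(a,b)$ be $0$ if $a=b$, $1$ if $ab\in E(H)$, and $2$ otherwise. A set $A\subseteq V(H)$ is an adjacency resolving set of $H$ if for all distinct $a,b\in V(H)$ there is $z\in A$ with $d_{H,1}(a,z)\ne d_{H,1}(b,z)$. $\mathrm{adim}(H)$ is the minimum size of an adjacency resolving set of $H$. $G-e$ denotes $G$ with the edge $e$ deleted. *)

theory Defs
  imports Main
begin

definition simple_graph :: "'a set \<Rightarrow> 'a set set \<Rightarrow> bool" where
  "simple_graph V E \<longleftrightarrow> finite V \<and> (\<forall>e\<in>E. e \<subseteq> V \<and> card e = 2)"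

definition adj_dist :: "'a set set \<Rightarrow> 'a \<Rightarrow> 'a \<Rightarrow> nat" where
  "adj_dist E a b = (if a = b then 0 else if {a, b} \<in> E then 1 else 2)"

definition adj_resolving :: "'a set \<Rightarrow> 'a set set \<Rightarrow> 'a set \<Rightarrow> bool" where
  "adj_resolving V E A \<longleftrightarrow> A \<subseteq> V \<and>
     (\<forall>a\<in>V. \<forall>b\<in>V. a \<noteq> b \<longrightarrow> (\<exists>z\<in>A. adj_dist E a z \<noteq> adj_dist E b z))"

definition adim :: "'a set \<Rightarrow> 'a set set \<Rightarrow> nat" where
  "adim V E = Min {card A | A. adj_resolving V E A}"

end

theory Submission
  imports Defs
begin

text \<open>Deleting or adding the edge e changes the adjacency distance only between the two
  endpoints of e. Hence a resolving set avoiding e stays resolving, and a resolving set meeting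
  e stays resolving once the (at most one) missing endpoint is added: a pair containing an
  endpoint of e is then resolved by that endpoint itself, and any other pair keeps its old
  resolving vertex, whose distances to the pair are unchanged. As G and G - e agree outside e,
  this argument applies in both directions.\<close>

lemma finite_adj_resolving_cards:
  assumes "finite V"
  shows "finite {card A | A. adj_resolving V E A}"
proof -
  have "{card A | A. adj_resolving V E A} \<subseteq> card ` Pow V"
    by (auto simp: adj_resolving_def)
  then show ?thesis
    using assms finite_subset by blast
qed

lemma adj_resolving_self: "adj_resolving V E V"
  unfolding adj_resolving_def
proof (intro conjI ballI impI)
  fix a b assume "a \<in> V" "b \<in> V" "a \<noteq> b"
  then show "\<exists>z\<in>V. adj_dist E a z \<noteq> adj_dist E b z"
    by (intro bexI[of _ a]) (auto simp: adj_dist_def)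
qed simp

lemma adim_le_card:
  assumes "finite V" "adj_resolving V E A"
  shows "adim V E \<le> card A"
  unfolding adim_def using assms finite_adj_resolving_cards by (intro Min_le) auto

lemma adim_attained:
  assumes "finite V"
  obtains A where "adj_resolving V E A" "adim V E = card A"
proof -
  have "{card A | A. adj_resolving V E A} \<noteq> {}"
    using adj_resolving_self by blast
  from Min_in[OF finite_adj_resolving_cards[OF assms] this] that show ?thesis
    unfolding adim_def by auto
qed

lemma adj_dist_eq_if_agree_off_edge:
  assumes "E1 - {e} = E2 - {e}" "{x, z} \<noteq> e"
  shows "adj_dist E1 x z = adj_dist E2 x z"
proof -
  have "{x, z} \<in> E1 \<longleftrightarrow> {x, z} \<in> E2"
    using assms by blast
  then show ?thesis
    unfolding adj_dist_def by simp
qed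

lemma adj_resolving_if_agree_off_edge_disjoint:
  assumes res: "adj_resolving V E1 A" and agree: "E1 - {e} = E2 - {e}" and "A \<inter> e = {}"
  shows "adj_resolving V E2 A"
  unfolding adj_resolving_def
proof (intro conjI ballI impI)
  show "A \<subseteq> V"
    using res by (simp add: adj_resolving_def)
next
  fix a b assume "a \<in> V" "b \<in> V" "a \<noteq> b"
  then obtain z where z: "z \<in> A" "adj_dist E1 a z \<noteq> adj_dist E1 b z"
    using res unfolding adj_resolving_def by blast
  have "{a, z} \<noteq> e" "{b, z} \<noteq> e"
    using z(1) \<open>A \<inter> e = {}\<close> by auto
  then show "\<exists>z\<in>A. adj_dist E2 a z \<noteq> adj_dist E2 b z"
    using z adj_dist_eq_if_agree_off_edge[OF agree] by metis
qed

lemma adj_resolving_if_agree_off_edge_Un: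
  assumes res: "adj_resolving V E1 A" and agree: "E1 - {e} = E2 - {e}" and "e \<subseteq> V"
  shows "adj_resolving V E2 (A \<union> e)"
  unfolding adj_resolving_def
proof (intro conjI ballI impI)
  show "A \<union> e \<subseteq> V"
    using res \<open>e \<subseteq> V\<close> by (auto simp: adj_resolving_def)
next
  fix a b assume "a \<in> V" "b \<in> V" and ab: "a \<noteq> b"
  then obtain z where z: "z \<in> A" "adj_dist E1 a z \<noteq> adj_dist E1 b z"
    using res unfolding adj_resolving_def by blast
  show "\<exists>z\<in>A \<union> e. adj_dist E2 a z \<noteq> adj_dist E2 b z"
  proof (cases "a \<in> e \<or> b \<in> e")
    case True
    moreover have "adj_dist E2 a a \<noteq> adj_dist E2 b a" "adj_dist E2 a b \<noteq> adj_dist E2 b b"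
      using ab by (auto simp: adj_dist_def)
    ultimately show ?thesis by blast
  next
    case False
    then have "{a, z} \<noteq> e" "{b, z} \<noteq> e" by auto
    then show ?thesis
      using z adj_dist_eq_if_agree_off_edge[OF agree] by (metis UnI1)
  qed
qed

lemma card_Un_two_element_le:
  assumes "finite A" "card e = 2" "A \<inter> e \<noteq> {}"
  shows "card (A \<union> e) \<le> card A + 1"
proof -
  have "finite e"
    using \<open>card e = 2\<close> card.infinite by fastforce
  then have "card A + card e = card (A \<union> e) + card (A \<inter> e)"
    using \<open>finite A\<close> card_Un_Int by blast
  moreover have "card (A \<inter> e) \<ge> 1"
    using \<open>finite e\<close> \<open>A \<inter> e \<noteq> {}\<close> by (simp add: Suc_le_eq card_gt_0_iff)
  ultimately show ?thesis
    using \<open>card e = 2\<close> by linarith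
qed

lemma adim_le_Suc_if_agree_off_edge:
  assumes "finite V" "e \<subseteq> V" "card e = 2" and agree: "E1 - {e} = E2 - {e}"
  shows "adim V E2 \<le> adim V E1 + 1"
proof -
  obtain A where A: "adj_resolving V E1 A" "adim V E1 = card A"
    using adim_attained \<open>finite V\<close> by blast
  have "finite A"
    using A(1) \<open>finite V\<close> finite_subset unfolding adj_resolving_def by blast
  show ?thesis
  proof (cases "A \<inter> e = {}")
    case True
    with A(1) agree have "adj_resolving V E2 A"
      by (rule adj_resolving_if_agree_off_edge_disjoint)
    then show ?thesis
      using A(2) adim_le_card \<open>finite V\<close> by fastforce
  next
    case False
    have "adim V E2 \<le> card (A \<union> e)"
      using adim_le_card adj_resolving_if_agree_off_edge_Un A(1) agree assms(1,2) by blast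
    also have "\<dots> \<le> adim V E1 + 1"
      using card_Un_two_element_le \<open>finite A\<close> \<open>card e = 2\<close> False A(2) by simp
    finally show ?thesis .
  qed
qed

theorem theorem6p6:
  fixes V :: "'a set" and E :: "'a set set" and e :: "'a set"
  assumes "simple_graph V E" and "e \<in> E"
  shows "int (adim V E) - 1 \<le> int (adim V (E - {e})) \<and>
         adim V (E - {e}) \<le> adim V E + 1"
proof -
  have "finite V" "e \<subseteq> V" "card e = 2"
    using assms unfolding simple_graph_def by auto
  moreover have "E - {e} = (E - {e}) - {e}"
    by blast
  ultimately have "adim V (E - {e}) \<le> adim V E + 1" "adim V E \<le> adim V (E - {e}) + 1"
    using adim_le_Suc_if_agree_off_edge by metis+
  then show ?thesis
    by linarith
qed

end
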